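(* Assume $abcd\neq0$. Let $(\omega_M)_{M\ge1}$ be points of $B_{in}$, let $\theta_M\in(0,\pi)$ be defined by $\cos\theta_M=x(\omega_M)$, and put $\theta'_M=\min\{\theta_M,\pi-\theta_M\}$. If $M\theta'_M\to\theta_*$ as $M\to\infty$ with $\theta_*\in(0,\infty)\setminus\pi\mathbb{Z}$, then \[\lim_{M\to\infty}\frac{\mathcal{E}_M(\omega_M)}{M}=\frac{1}{\sin^2\theta_*}\left(1-\frac{\sin2\theta_*}{2\theta_*}\right).\]
   Context: Setting: $C=\begin{bmatrix} a&b\\ c&d\end{bmatrix}$ a fixed $2\times2$ unitary matrix, $\Delta=\det C$, a fixed square root $\Delta^{1/2}$; for each $M\ge1$, $\Gamma_M=\{0,\dots,M-1\}$ and $E_M$ is the linear map on $\ell^2(\Gamma_M;\mathbb{C}^2)$ with $(E_M\varphi)(x)=P\varphi(x+1)+Q\varphi(x-1)$, $\varphi(-1)=\varphi(M)=0$, $P=\begin{bmatrix} a&b\\0&0\end{bmatrix}$, $Q=\begin{bmatrix}0&0\\c&d\end{bmatrix}$. For $\omega$ on the unit circle let $z=\Delta^{1/2}\omega$ and let $\varphi$ be the unique solution of $(z-E_M)\varphi=\delta_0|R\rangle$, $|R\rangle=(0,1)^\top$; the energy is $\mathcal{E}_M(\omega)=\sum_{n=0}^{M-1}\|\varphi(n)\|^2_{\mathbb{C}^2}$. Let $x(\omega)=\frac{\omega+\omega^{-1}}{2|a|}$ and $B_{in}=\{\omega:|\omega|=1,\ |x(\omega)|<1\}$. *)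

theory Defs
  imports "HOL-Analysis.Analysis"
begin

definition unitary2 :: "complex \<Rightarrow> complex \<Rightarrow> complex \<Rightarrow> complex \<Rightarrow> bool" where
  "unitary2 a b c d \<longleftrightarrow>
     cnj a * a + cnj c * c = 1 \<and> cnj a * b + cnj c * d = 0 \<and>
     cnj b * a + cnj d * c = 0 \<and> cnj b * b + cnj d * d = 1"

text \<open>Vectors in C^2 are pairs. Functions on Gamma_M = {0..M-1} are represented as
  functions on int vanishing outside Gamma_M (this encodes phi(-1) = phi(M) = 0).\<close>
definition supported_on :: "nat \<Rightarrow> (int \<Rightarrow> complex \<times> complex) \<Rightarrow> bool" where
  "supported_on M \<phi> \<longleftrightarrow> (\<forall>n. (n < 0 \<or> n \<ge> int M) \<longrightarrow> \<phi> n = (0, 0))"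

text \<open>(E_M phi)(x) = P phi(x+1) + Q phi(x-1), P = [[a,b],[0,0]], Q = [[0,0],[c,d]].\<close>
definition E_op :: "complex \<Rightarrow> complex \<Rightarrow> complex \<Rightarrow> complex \<Rightarrow>
    (int \<Rightarrow> complex \<times> complex) \<Rightarrow> int \<Rightarrow> complex \<times> complex" where
  "E_op a b c d \<phi> x =
     (a * fst (\<phi> (x + 1)) + b * snd (\<phi> (x + 1)),
      c * fst (\<phi> (x - 1)) + d * snd (\<phi> (x - 1)))"

text \<open>phi solves (z - E_M) phi = delta_0 |R>, |R> = (0,1).\<close>
definition solves :: "complex \<Rightarrow> complex \<Rightarrow> complex \<Rightarrow> complex \<Rightarrow> nat \<Rightarrow> complex \<Rightarrow>
    (int \<Rightarrow> complex \<times> complex) \<Rightarrow> bool" where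
  "solves a b c d M z \<phi> \<longleftrightarrow> supported_on M \<phi> \<and>
     (\<forall>x. 0 \<le> x \<and> x < int M \<longrightarrow>
        (z * fst (\<phi> x) - fst (E_op a b c d \<phi> x),
         z * snd (\<phi> x) - snd (E_op a b c d \<phi> x)) = (if x = 0 then (0, 1) else (0, 0)))"

text \<open>Energy E_M(omega), with z = s * omega where s is the fixed square root of det C.\<close>
definition energy :: "complex \<Rightarrow> complex \<Rightarrow> complex \<Rightarrow> complex \<Rightarrow> complex \<Rightarrow> nat \<Rightarrow> complex \<Rightarrow> real" where
  "energy a b c d s M \<omega> =
     (let \<phi> = (THE \<phi>. solves a b c d M (s * \<omega>) \<phi>) in
      \<Sum>n<M. (cmod (fst (\<phi> (int n))))\<^sup>2 + (cmod (snd (\<phi> (int n))))\<^sup>2)"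

definition xfun :: "complex \<Rightarrow> complex \<Rightarrow> complex" where
  "xfun a \<omega> = (\<omega> + inverse \<omega>) / (2 * complex_of_real (cmod a))"

definition B_in :: "complex \<Rightarrow> complex set" where
  "B_in a = {\<omega>. cmod \<omega> = 1 \<and> cmod (xfun a \<omega>) < 1}"

end

theory Submission
  imports Defs
begin

text \<open>
  The resolvent equation is a two-term recursion in x. Solving it backwards from the right edge,
  where the first component must vanish, gives the solution explicitly in terms of the angle
  \<open>\<theta>\<close> with \<open>cos \<theta> = x(\<omega>)\<close>: up to a unimodular factor \<open>\<mu>\<^sup>n\<close>, the two components at site n
  are proportional to \<open>sin t\<close> and to \<open>sin \<theta> cos t + (cos \<theta> - |a|/\<omega>) sin t\<close>, with phase
  \<open>t = (M - 1 - n) \<theta>\<close>. Normalising at x = 0 gives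
  \<open>E_M(\<omega>) = \<Sum>_{k<M} ((1 - |a|\<^sup>2) sin\<^sup>2(k\<theta>) + A(k\<theta>)) / A((M - 1)\<theta>)\<close>, where \<open>A\<close> is the squared
  modulus of the second component. When \<open>M \<theta>' \<rightarrow> \<theta>\<^sub>*\<close>, \<open>sin \<theta>\<close> tends to 0 and
  \<open>A(x) = (1 - |a|\<^sup>2) sin\<^sup>2 x + O(sin \<theta>)\<close> uniformly in x, while the Riemann sum
  \<open>M\<^sup>-\<^sup>1 \<Sum>_{k<M} sin\<^sup>2(k\<theta>)\<close> tends to \<open>1/2 - sin(2\<theta>\<^sub>*)/(4\<theta>\<^sub>*)\<close>.
\<close>

section \<open>Unitary coins and the resolvent equation\<close>

lemma unitary2_det_norm:
  assumes "unitary2 a b c d"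
  shows "cmod (a * d - b * c) = 1"
proof -
  have "cnj (a * d - b * c) * (a * d - b * c) =
      (cnj a * a + cnj c * c) * (cnj b * b + cnj d * d) - (cnj a * b + cnj c * d) * (cnj b * a + cnj d * c)"
    by (simp add: algebra_simps)
  with assms have "complex_of_real ((cmod (a * d - b * c))\<^sup>2) = 1"
    unfolding unitary2_def complex_norm_square by (simp add: mult.commute)
  then have "(cmod (a * d - b * c))\<^sup>2 = 1"
    by (simp only: of_real_eq_1_iff)
  then show ?thesis
    using norm_ge_zero[of "a * d - b * c"] by (auto simp: power2_eq_1_iff)
qed

lemma unitary2_adjugate:
  assumes "unitary2 a b c d"
  shows "d = (a * d - b * c) * cnj a" and "c = - (a * d - b * c) * cnj b"
proof -
  have col1: "cnj a * a + cnj c * c = 1" and col2: "cnj b * b + cnj d * d = 1"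
    and ab: "cnj a * b = - cnj c * d" and ba: "cnj b * a = - cnj d * c"
    using assms unfolding unitary2_def by (auto simp: eq_neg_iff_add_eq_0)
  have "(a * d - b * c) * cnj a = d * (cnj a * a) - c * (cnj a * b)"
    by (simp add: algebra_simps)
  also have "\<dots> = d * (cnj a * a + cnj c * c)"
    using ab by (simp add: algebra_simps)
  finally show "d = (a * d - b * c) * cnj a"
    using col1 by simp
  have "(a * d - b * c) * cnj b = d * (cnj b * a) - c * (cnj b * b)"
    by (simp add: algebra_simps)
  also have "\<dots> = - c * (cnj b * b + cnj d * d)"
    using ba by (simp add: algebra_simps)
  finally have "(a * d - b * c) * cnj b = - c"
    using col2 by simp
  then show "c = - (a * d - b * c) * cnj b"
    by (metis minus_minus mult_minus_left)
qed

lemma unitary2_row_norm: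
  assumes "unitary2 a b c d"
  shows "(cmod a)\<^sup>2 + (cmod b)\<^sup>2 = 1"
proof -
  define D where "D = a * d - b * c"
  have "D = a * (D * cnj a) - b * (- D * cnj b)"
    using unitary2_adjugate[OF assms] unfolding D_def by simp
  then have "D * (cnj a * a + cnj b * b) = D * 1"
    by (simp add: algebra_simps)
  moreover have "D \<noteq> 0"
    using unitary2_det_norm[OF assms] unfolding D_def by auto
  ultimately have "cnj a * a + cnj b * b = 1"
    by simp
  then have "complex_of_real ((cmod a)\<^sup>2 + (cmod b)\<^sup>2) = 1"
    by (simp only: of_real_add complex_norm_square) (simp add: mult.commute)
  then show ?thesis
    using of_real_eq_1_iff by blast
qed

lemma unitary2_norm_bounds:
  assumes "unitary2 a b c d" and "a \<noteq> 0" and "b \<noteq> 0"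
  shows "0 < cmod a" and "cmod a < 1"
proof -
  have "(cmod a)\<^sup>2 < 1"
    using unitary2_row_norm[OF assms(1)] assms(3) by (smt (verit) zero_less_norm_iff zero_less_power2)
  then show "cmod a < 1"
    using power_less_one_iff[of "cmod a" 2] by simp
  show "0 < cmod a"
    using assms(2) by simp
qed

lemma solves_iff:
  "solves a b c d M z \<psi> \<longleftrightarrow> supported_on M \<psi> \<and> (\<forall>x. 0 \<le> x \<and> x < int M \<longrightarrow>
      z * fst (\<psi> x) = a * fst (\<psi> (x + 1)) + b * snd (\<psi> (x + 1)) \<and>
      z * snd (\<psi> x) = c * fst (\<psi> (x - 1)) + d * snd (\<psi> (x - 1)) + (if x = 0 then 1 else 0))"
  unfolding solves_def E_op_def by (auto simp: algebra_simps)

lemma solves_proportional_to_backward_solution: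
  fixes fu fv :: "nat \<Rightarrow> complex"
  assumes sol: "solves a b c d M z \<psi>" and M: "M \<ge> 1" and nonzero: "z \<noteq> 0" "d \<noteq> 0"
    and step_fst: "\<And>n. z * fu n = a * fu (Suc n) + b * fv (Suc n)"
    and step_snd: "\<And>n. z * fv (Suc n) = c * fu n + d * fv n"
    and right_edge: "fu (M - 1) = 0" "fv (M - 1) \<noteq> 0"
  obtains k where "\<And>n. n < M \<Longrightarrow> \<psi> (int n) = (k * fu n, k * fv n)"
proof -
  have supp: "supported_on M \<psi>"
    and eq_fst: "\<And>x. 0 \<le> x \<Longrightarrow> x < int M \<Longrightarrow> z * fst (\<psi> x) = a * fst (\<psi> (x + 1)) + b * snd (\<psi> (x + 1))"
    and eq_snd: "\<And>x. 0 < x \<Longrightarrow> x < int M \<Longrightarrow> z * snd (\<psi> x) = c * fst (\<psi> (x - 1)) + d * snd (\<psi> (x - 1))"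
    using sol unfolding solves_iff by auto
  define m where "m = M - 1"
  define k where "k = snd (\<psi> (int m)) / fv m"
  have m: "int m + 1 = int M"
    using M unfolding m_def by auto
  have backward: "\<psi> (int (m - j)) = (k * fu (m - j), k * fv (m - j))" if "j \<le> m" for j
    using that
  proof (induction j)
    case 0
    have "\<psi> (int m + 1) = (0, 0)"
      using supp m unfolding supported_on_def by auto
    then have "fst (\<psi> (int m)) = 0"
      using eq_fst[of "int m"] m nonzero by simp
    then show ?case
      using right_edge unfolding k_def m_def by (simp add: prod_eq_iff)
  next
    case (Suc j)
    define x where "x = m - Suc j"
    have x: "m - j = Suc x" "int x + 1 < int M"
      using Suc.prems m unfolding x_def by auto
    have "\<psi> (int (Suc x)) = (k * fu (Suc x), k * fv (Suc x))"
      using Suc.IH Suc.prems x(1) by (metis Suc_leD)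
    then have IH: "\<psi> (int x + 1) = (k * fu (Suc x), k * fv (Suc x))"
      by (metis add.commute of_nat_Suc)
    have "z * fst (\<psi> (int x)) = z * (k * fu x)"
      using eq_fst[of "int x"] x IH step_fst[of x] by (simp add: algebra_simps)
    then have fst_x: "fst (\<psi> (int x)) = k * fu x"
      using nonzero by simp
    have "c * (k * fu x) + d * snd (\<psi> (int x)) = z * snd (\<psi> (int x + 1))"
      using eq_snd[of "int x + 1"] x fst_x by simp
    also have "\<dots> = k * (c * fu x + d * fv x)"
      using IH step_snd[of x] by (simp add: mult.left_commute)
    finally have "d * snd (\<psi> (int x)) = d * (k * fv x)"
      by (simp add: algebra_simps)
    then have "snd (\<psi> (int x)) = k * fv x"
      using nonzero by simp
    with fst_x show ?case
      unfolding x_def by (simp add: prod_eq_iff)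
  qed
  have "\<psi> (int n) = (k * fu n, k * fv n)" if "n < M" for n
    using backward[of "m - n"] that unfolding m_def by (simp add: diff_diff_cancel)
  then show ?thesis
    by (rule that)
qed

lemma the_solves_eq_backward_solution:
  fixes fu fv :: "nat \<Rightarrow> complex"
  assumes M: "M \<ge> 1" and nonzero: "z \<noteq> 0" "d \<noteq> 0"
    and step_fst: "\<And>n. z * fu n = a * fu (Suc n) + b * fv (Suc n)"
    and step_snd: "\<And>n. z * fv (Suc n) = c * fu n + d * fv n"
    and right_edge: "fu (M - 1) = 0" "fv (M - 1) \<noteq> 0"
    and left_edge: "fv 0 \<noteq> 0"
  shows "(THE \<psi>. solves a b c d M z \<psi>) =
    (\<lambda>x. if 0 \<le> x \<and> x < int M then (fu (nat x) / (z * fv 0), fv (nat x) / (z * fv 0)) else (0, 0))"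
    (is "_ = ?\<phi>")
proof (rule the_equality)
  show "solves a b c d M z ?\<phi>"
    unfolding solves_iff
  proof (intro conjI allI impI)
    show "supported_on M ?\<phi>"
      unfolding supported_on_def by auto
  next
    fix x :: int
    assume x: "0 \<le> x \<and> x < int M"
    show "z * fst (?\<phi> x) = a * fst (?\<phi> (x + 1)) + b * snd (?\<phi> (x + 1))"
    proof (cases "x + 1 < int M")
      case True
      then have "nat (x + 1) = Suc (nat x)"
        using x by auto
      then show ?thesis
        using x True step_fst[of "nat x"] nonzero left_edge by (simp add: field_simps)
    next
      case False
      then have "nat x = M - 1"
        using x by auto
      then show ?thesis
        using x False right_edge by simp
    qed
    show "z * snd (?\<phi> x) = c * fst (?\<phi> (x - 1)) + d * snd (?\<phi> (x - 1)) + (if x = 0 then 1 else 0)"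
    proof (cases "x = 0")
      case True
      then show ?thesis
        using M nonzero left_edge by simp
    next
      case False
      then have "nat x = Suc (nat (x - 1))"
        using x by auto
      then show ?thesis
        using x False step_snd[of "nat (x - 1)"] nonzero left_edge by (simp add: field_simps)
    qed
  qed
next
  fix \<psi>
  assume sol: "solves a b c d M z \<psi>"
  then obtain k where k: "\<And>n. n < M \<Longrightarrow> \<psi> (int n) = (k * fu n, k * fv n)"
    using solves_proportional_to_backward_solution[OF _ M nonzero step_fst step_snd right_edge] by blast
  have supp: "supported_on M \<psi>" and "z * snd (\<psi> 0) = c * fst (\<psi> (- 1)) + d * snd (\<psi> (- 1)) + 1"
    using sol M unfolding solves_iff by auto
  then have "z * snd (\<psi> 0) = 1"
    unfolding supported_on_def by simp
  then have k_val: "k = 1 / (z * fv 0)"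
    using k[of 0] M nonzero left_edge by (simp add: field_simps)
  show "\<psi> = ?\<phi>"
  proof
    fix x :: int
    show "\<psi> x = ?\<phi> x"
    proof (cases "0 \<le> x \<and> x < int M")
      case True
      then obtain n where "x = int n" "n < M"
        by (metis nat_0_le nat_less_iff)
      then show ?thesis
        using k[of n] k_val by simp
    next
      case False
      then show ?thesis
        using supp unfolding supported_on_def by auto
    qed
  qed
qed

lemma energy_eq_backward_solution:
  fixes fu fv :: "nat \<Rightarrow> complex"
  assumes M: "M \<ge> 1" and nonzero: "s * \<omega> \<noteq> 0" "d \<noteq> 0"
    and step_fst: "\<And>n. s * \<omega> * fu n = a * fu (Suc n) + b * fv (Suc n)"
    and step_snd: "\<And>n. s * \<omega> * fv (Suc n) = c * fu n + d * fv n"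
    and right_edge: "fu (M - 1) = 0" "fv (M - 1) \<noteq> 0"
    and left_edge: "fv 0 \<noteq> 0"
  shows "energy a b c d s M \<omega> =
    (\<Sum>n<M. (cmod (fu n))\<^sup>2 + (cmod (fv n))\<^sup>2) / (cmod (s * \<omega> * fv 0))\<^sup>2"
proof -
  have "energy a b c d s M \<omega> =
      (\<Sum>n<M. ((cmod (fu n))\<^sup>2 + (cmod (fv n))\<^sup>2) / (cmod (s * \<omega> * fv 0))\<^sup>2)"
    unfolding energy_def Let_def the_solves_eq_backward_solution[OF assms]
    by (rule sum.cong) (auto simp: norm_divide power_divide add_divide_distrib)
  then show ?thesis
    by (simp add: sum_divide_distrib)
qed

section \<open>The explicit solution\<close>

definition amp_sq :: "real \<Rightarrow> real \<Rightarrow> real \<Rightarrow> real" where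
  "amp_sq r \<theta> t = (sin \<theta> * cos t + (1 - r\<^sup>2) * cos \<theta> * sin t)\<^sup>2 + r\<^sup>2 * (1 - r\<^sup>2 * (cos \<theta>)\<^sup>2) * (sin t)\<^sup>2"

lemma amp_sq_pos:
  assumes "0 < r" "r < 1" "0 < \<theta>" "\<theta> < pi"
  shows "0 < amp_sq r \<theta> t"
proof (cases "sin t = 0")
  case True
  then have "(cos t)\<^sup>2 = 1"
    using sin_cos_squared_add[of t] by simp
  moreover have "0 < sin \<theta>"
    using assms by (simp add: sin_gt_zero)
  ultimately show ?thesis
    using True unfolding amp_sq_def by (simp add: power_mult_distrib)
next
  case False
  have "(cos \<theta>)\<^sup>2 \<le> 1"
    by (simp add: abs_square_le_1 abs_cos_le_one)
  then have "r\<^sup>2 * (cos \<theta>)\<^sup>2 \<le> r\<^sup>2"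
    by (simp add: mult_left_le)
  moreover have "r\<^sup>2 < 1"
    using assms by (simp add: power_less_one_iff)
  ultimately have "r\<^sup>2 * (cos \<theta>)\<^sup>2 < 1"
    by linarith
  then have "0 < r\<^sup>2 * (1 - r\<^sup>2 * (cos \<theta>)\<^sup>2) * (sin t)\<^sup>2"
    using False assms by (intro mult_pos_pos) auto
  then show ?thesis
    unfolding amp_sq_def by (smt (verit) zero_le_power2)
qed

lemma amp_sq_approx:
  assumes "0 \<le> r" "r \<le> 1"
  shows "\<bar>amp_sq r \<theta> t - (1 - r\<^sup>2) * (sin t)\<^sup>2\<bar> \<le> 4 * \<bar>sin \<theta>\<bar>"
proof -
  have "amp_sq r \<theta> t - (1 - r\<^sup>2) * (sin t)\<^sup>2 =
      sin \<theta> * (sin \<theta> * (cos t)\<^sup>2 + 2 * (1 - r\<^sup>2) * cos \<theta> * cos t * sin t - (1 - 2 * r\<^sup>2) * sin \<theta> * (sin t)\<^sup>2)"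
    using sin_cos_squared_add[of \<theta>] unfolding amp_sq_def by algebra
  moreover have "\<bar>sin \<theta> * (cos t)\<^sup>2 + 2 * (1 - r\<^sup>2) * cos \<theta> * cos t * sin t - (1 - 2 * r\<^sup>2) * sin \<theta> * (sin t)\<^sup>2\<bar> \<le> 4"
  proof -
    have "\<bar>1 - r\<^sup>2\<bar> \<le> 1" "\<bar>1 - 2 * r\<^sup>2\<bar> \<le> 1"
      using assms by (auto simp: abs_le_iff power_le_one)
    then have "\<bar>sin \<theta> * (cos t)\<^sup>2\<bar> \<le> 1" "\<bar>(1 - r\<^sup>2) * cos \<theta> * cos t * sin t\<bar> \<le> 1"
      "\<bar>(1 - 2 * r\<^sup>2) * sin \<theta> * (sin t)\<^sup>2\<bar> \<le> 1"
      unfolding abs_mult abs_power2 by (intro mult_le_one; simp add: abs_square_le_1 abs_sin_le_one abs_cos_le_one)+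
    then show ?thesis
      by linarith
  qed
  ultimately show ?thesis
    by (simp add: abs_mult mult.commute mult_left_mono)
qed

locale coin_resolvent =
  fixes a b c d s \<omega> :: complex and \<theta> :: real
  assumes unitary: "unitary2 a b c d"
    and det_sqrt: "s\<^sup>2 = a * d - b * c"
    and nonzero: "a * b * c * d \<noteq> 0"
    and unit_omega: "cmod \<omega> = 1"
    and angle: "0 < \<theta>" "\<theta> < pi"
    and cos_angle: "complex_of_real (cos \<theta>) = xfun a \<omega>"
begin

abbreviation r :: real where
  "r \<equiv> cmod a"

lemma a_nonzero: "a \<noteq> 0" and b_nonzero: "b \<noteq> 0" and d_nonzero: "d \<noteq> 0"
  using nonzero by auto

lemma omega_nonzero: "\<omega> \<noteq> 0"
  using unit_omega by auto

lemma r_pos: "0 < r" and r_less_one: "r < 1"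
  using unitary2_norm_bounds[OF unitary a_nonzero b_nonzero] by auto

lemma cnj_a_mult: "cnj a * a = r\<^sup>2"
  by (metis complex_norm_square mult.commute of_real_power)

lemma cnj_b_mult: "cnj b * b = 1 - r\<^sup>2"
proof -
  have "cnj b * b = complex_of_real ((cmod b)\<^sup>2)"
    by (subst complex_norm_square) (rule mult.commute)
  also have "(cmod b)\<^sup>2 = 1 - r\<^sup>2"
    using unitary2_row_norm[OF unitary] by linarith
  finally show ?thesis
    by simp
qed

lemma omega_add_inverse: "\<omega> + 1 / \<omega> = 2 * r * cos \<theta>"
proof -
  have "\<omega> + inverse \<omega> = 2 * complex_of_real r * cos \<theta>"
    using cos_angle r_pos omega_nonzero unfolding xfun_def by (simp add: divide_simps ac_simps)
  then show ?thesis
    by (simp add: inverse_eq_divide)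
qed

lemma Re_omega: "Re \<omega> = r * cos \<theta>"
proof -
  have "complex_of_real (2 * Re \<omega>) = complex_of_real (2 * (r * cos \<theta>))"
    using omega_add_inverse divide_conv_cnj[OF unit_omega, of 1] by (simp add: complex_add_cnj)
  then show ?thesis
    by (simp only: of_real_eq_iff)
qed

lemma norm_s: "cmod s = 1"
proof -
  have "(cmod s)\<^sup>2 = 1"
    using unitary2_det_norm[OF unitary] det_sqrt by (metis norm_power)
  then show ?thesis
    using norm_ge_zero[of s] by (auto simp: power2_eq_1_iff)
qed

definition \<mu> :: complex where
  "\<mu> = s * r / a"

lemma norm_mu: "cmod \<mu> = 1"
  unfolding \<mu>_def norm_divide norm_mult norm_of_real norm_s using r_pos by simp

definition wave :: "real \<Rightarrow> complex" where
  "wave t = sin \<theta> * cos t + (cos \<theta> - r / \<omega>) * complex_of_real (sin t)"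

lemma wave_shift:
  "\<omega> * wave (t - \<theta>) = r * wave t - (1 - r\<^sup>2) / \<omega> * complex_of_real (sin t)"
proof -
  have "sin t = sin \<theta> * cos (t - \<theta>) + cos \<theta> * sin (t - \<theta>)"
    using sin_add[of \<theta> "t - \<theta>"] by (simp add: mult.commute)
  then have "\<omega> * wave (t - \<theta>) = \<omega> * complex_of_real (sin t) - r * complex_of_real (sin (t - \<theta>))"
    unfolding wave_def using omega_nonzero by (simp add: field_simps)
  also have "\<dots> = r * complex_of_real (sin (t + \<theta>) + sin (t - \<theta>)) - complex_of_real (sin t) / \<omega>
      - r * complex_of_real (sin (t - \<theta>))"
  proof -
    have "(\<omega> + 1 / \<omega>) * complex_of_real (sin t) = r * complex_of_real (sin (t + \<theta>) + sin (t - \<theta>))"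
      unfolding omega_add_inverse sin_add sin_diff by simp
    then show ?thesis
      using omega_nonzero by (simp add: field_simps)
  qed
  also have "\<dots> = r * wave t - (1 - r\<^sup>2) / \<omega> * complex_of_real (sin t)"
    unfolding wave_def sin_add using omega_nonzero by (simp add: field_simps power2_eq_square)
  finally show ?thesis .
qed

text \<open>
  The homogeneous solution whose first component vanishes at the right edge \<open>n = M - 1\<close>; the
  transfer matrix of the recursion has eigenvalues \<open>\<mu> e\<^sup>\<plusminus>\<^sup>i\<^sup>\<theta>\<close>.
\<close>
definition right_fst :: "nat \<Rightarrow> nat \<Rightarrow> complex" where
  "right_fst M n = \<mu> ^ n * (b * r / (a * \<omega>)) * complex_of_real (sin ((real M - 1 - real n) * \<theta>))"

definition right_snd :: "nat \<Rightarrow> nat \<Rightarrow> complex" where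
  "right_snd M n = \<mu> ^ n * wave ((real M - 1 - real n) * \<theta>)"

lemma phase_Suc: "(real M - 1 - real (Suc n)) * \<theta> = (real M - 1 - real n) * \<theta> - \<theta>"
  by (simp add: algebra_simps)

lemma right_fst_step:
  "s * \<omega> * right_fst M n = a * right_fst M (Suc n) + b * right_snd M (Suc n)"
proof -
  define t where "t = (real M - 1 - real n) * \<theta>"
  have "sin t = sin \<theta> * cos (t - \<theta>) + cos \<theta> * sin (t - \<theta>)"
    using sin_add[of \<theta> "t - \<theta>"] by (simp add: mult.commute)
  then show ?thesis
    unfolding right_fst_def right_snd_def wave_def phase_Suc t_def[symmetric] \<mu>_def
    using a_nonzero omega_nonzero by (simp add: field_simps)
qed

lemma right_snd_step:
  "s * \<omega> * right_snd M (Suc n) = c * right_fst M n + d * right_snd M n"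
proof -
  define t where "t = (real M - 1 - real n) * \<theta>"
  define D where "D = a * d - b * c"
  have c: "c = - D * cnj b" and d: "d = D * cnj a"
    using unitary2_adjugate[OF unitary] unfolding D_def by simp_all
  have cnj_a: "cnj a = r\<^sup>2 / a" and cnj_b: "cnj b = (1 - r\<^sup>2) / b"
    using cnj_a_mult cnj_b_mult a_nonzero b_nonzero by (simp_all add: field_simps)
  have "s * \<omega> * right_snd M (Suc n) = \<mu> ^ n * (s * \<mu>) * (\<omega> * wave (t - \<theta>))"
    unfolding right_snd_def phase_Suc t_def[symmetric] by (simp add: algebra_simps)
  also have "\<dots> = \<mu> ^ n * (D * r / a) * (r * wave t - (1 - r\<^sup>2) / \<omega> * complex_of_real (sin t))"
    using det_sqrt unfolding wave_shift \<mu>_def D_def by (simp add: power2_eq_square)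
  also have "\<dots> = c * right_fst M n + d * right_snd M n"
    unfolding right_fst_def right_snd_def c d t_def[symmetric] cnj_a cnj_b
    using a_nonzero b_nonzero omega_nonzero by (simp add: field_simps power2_eq_square)
  finally show ?thesis .
qed

lemma norm_wave_sq: "(cmod (wave t))\<^sup>2 = amp_sq r \<theta> t"
proof -
  have Im_omega: "(Im \<omega>)\<^sup>2 = 1 - r\<^sup>2 * (cos \<theta>)\<^sup>2"
    using unit_omega Re_omega cmod_power2[of \<omega>] by (simp add: power_mult_distrib)
  have "Re (wave t) = sin \<theta> * cos t + (1 - r\<^sup>2) * cos \<theta> * sin t"
    and "Im (wave t) = r * Im \<omega> * sin t"
    unfolding wave_def divide_conv_cnj[OF unit_omega] using Re_omega
    by (simp_all add: algebra_simps power2_eq_square)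
  then show ?thesis
    unfolding cmod_power2[of "wave t"] amp_sq_def using Im_omega by (simp add: power_mult_distrib)
qed

lemma norm_right_fst_sq:
  "(cmod (right_fst M n))\<^sup>2 = (1 - r\<^sup>2) * (sin ((real M - 1 - real n) * \<theta>))\<^sup>2"
  using norm_mu unitary2_row_norm[OF unitary] unit_omega r_pos
  unfolding right_fst_def by (simp add: norm_mult norm_divide norm_power power_mult_distrib power_divide)

lemma norm_right_snd_sq: "(cmod (right_snd M n))\<^sup>2 = amp_sq r \<theta> ((real M - 1 - real n) * \<theta>)"
  using norm_mu unfolding right_snd_def norm_mult norm_power norm_wave_sq[symmetric] by simp

lemma energy_formula:
  assumes M: "M \<ge> 1"
  shows "energy a b c d s M \<omega> =
    (\<Sum>k<M. (1 - r\<^sup>2) * (sin (real k * \<theta>))\<^sup>2 + amp_sq r \<theta> (real k * \<theta>)) / amp_sq r \<theta> (real (M - 1) * \<theta>)"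
proof -
  have amp_pos: "0 < amp_sq r \<theta> t" for t
    using amp_sq_pos[OF r_pos r_less_one angle] .
  have z: "s * \<omega> \<noteq> 0"
    using norm_s omega_nonzero by auto
  have right_edge: "right_fst M (M - 1) = 0" "right_snd M (M - 1) \<noteq> 0"
    using M norm_mu sin_gt_zero[OF angle] unfolding right_fst_def right_snd_def wave_def
    by (auto simp: of_nat_diff)
  have left_edge: "right_snd M 0 \<noteq> 0"
    using norm_right_snd_sq[of M 0] amp_pos[of "(real M - 1 - real 0) * \<theta>"] by auto
  have "energy a b c d s M \<omega> =
      (\<Sum>n<M. (cmod (right_fst M n))\<^sup>2 + (cmod (right_snd M n))\<^sup>2) / (cmod (s * \<omega> * right_snd M 0))\<^sup>2"
    by (rule energy_eq_backward_solution[OF M z d_nonzero right_fst_step right_snd_step right_edge left_edge])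
  also have "(cmod (s * \<omega> * right_snd M 0))\<^sup>2 = amp_sq r \<theta> (real (M - 1) * \<theta>)"
    using norm_right_snd_sq[of M 0] norm_s unit_omega M by (simp add: norm_mult of_nat_diff)
  also have "(\<Sum>n<M. (cmod (right_fst M n))\<^sup>2 + (cmod (right_snd M n))\<^sup>2) =
      (\<Sum>n<M. (1 - r\<^sup>2) * (sin (real (M - Suc n) * \<theta>))\<^sup>2 + amp_sq r \<theta> (real (M - Suc n) * \<theta>))"
    by (rule sum.cong) (auto simp: norm_right_fst_sq norm_right_snd_sq of_nat_diff diff_diff_eq)
  also have "\<dots> = (\<Sum>k<M. (1 - r\<^sup>2) * (sin (real k * \<theta>))\<^sup>2 + amp_sq r \<theta> (real k * \<theta>))"
    by (rule sum.nat_diff_reindex)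
  finally show ?thesis .
qed

end

section \<open>Asymptotics\<close>

lemma sin_mult_sum_cos_double:
  "2 * sin t * (\<Sum>k<M. cos (2 * real k * t)) = sin ((2 * real M - 1) * t) + sin t"
proof (induction M)
  case 0
  then show ?case
    by simp
next
  case (Suc M)
  have "2 * sin t * (\<Sum>k<Suc M. cos (2 * real k * t)) =
      sin (2 * real M * t - t) + sin t + 2 * sin t * cos (2 * real M * t)"
    using Suc.IH by (simp add: algebra_simps)
  also have "\<dots> = sin (2 * real M * t + t) + sin t"
    by (simp add: sin_add sin_diff)
  finally show ?case
    by (simp add: algebra_simps)
qed

lemma sum_sin_sq_closed_form:
  assumes "sin t \<noteq> 0"
  shows "(\<Sum>k<M. (sin (real k * t))\<^sup>2) = real M / 2 - (sin ((2 * real M - 1) * t) + sin t) / (4 * sin t)"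
proof -
  have "(\<Sum>k<M. (sin (real k * t))\<^sup>2) = (\<Sum>k<M. 1 / 2 - cos (2 * real k * t) / 2)"
  proof (rule sum.cong)
    fix k
    have "cos (2 * real k * t) = 1 - 2 * (sin (real k * t))\<^sup>2"
      using cos_double_sin[of "real k * t"] by (simp add: mult.assoc)
    then show "(sin (real k * t))\<^sup>2 = 1 / 2 - cos (2 * real k * t) / 2"
      by (simp add: field_simps)
  qed simp
  also have "\<dots> = real M / 2 - (2 * sin t * (\<Sum>k<M. cos (2 * real k * t))) / (4 * sin t)"
    using assms by (simp add: sum_subtractf sum_divide_distrib)
  finally show ?thesis
    unfolding sin_mult_sum_cos_double .
qed

lemma sin_sq_mult_pi_minus: "(sin (real k * (pi - x)))\<^sup>2 = (sin (real k * x))\<^sup>2"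
proof -
  have "sin (real k * (pi - x)) = - ((-1) ^ k * sin (real k * x))"
    by (simp add: right_diff_distrib sin_diff)
  then show ?thesis
    by (simp add: power_mult_distrib flip: power_mult)
qed

lemma tendsto_sin_div_self: "((\<lambda>x::real. sin x / x) \<longlongrightarrow> 1) (at 0)"
  using DERIV_D[OF DERIV_sin[of 0]] by simp

lemma scaled_angle_tendsto:
  fixes t :: "nat \<Rightarrow> real"
  assumes lim: "(\<lambda>M. real M * t M) \<longlonglongrightarrow> \<tau>" and nonzero: "eventually (\<lambda>M. t M \<noteq> 0) sequentially"
  shows "t \<longlonglongrightarrow> 0" and "(\<lambda>M. real M * sin (t M)) \<longlonglongrightarrow> \<tau>"
proof -
  have "(\<lambda>M. real M * t M * inverse (real M)) \<longlonglongrightarrow> 0"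
    using tendsto_mult[OF lim lim_inverse_n] by simp
  moreover have "eventually (\<lambda>M. real M * t M * inverse (real M) = t M) sequentially"
    using eventually_gt_at_top[of 0] by eventually_elim simp
  ultimately show t: "t \<longlonglongrightarrow> 0"
    by (rule Lim_transform_eventually)
  have "filterlim t (at 0) sequentially"
    unfolding filterlim_at using t nonzero by simp
  then have "(\<lambda>M. real M * t M * (sin (t M) / t M)) \<longlonglongrightarrow> \<tau>"
    using tendsto_mult[OF lim filterlim_compose[OF tendsto_sin_div_self]] by (simp only: mult_1_right)
  moreover have "eventually (\<lambda>M. real M * t M * (sin (t M) / t M) = real M * sin (t M)) sequentially"
    using nonzero by eventually_elim simp
  ultimately show "(\<lambda>M. real M * sin (t M)) \<longlonglongrightarrow> \<tau>"
    by (rule Lim_transform_eventually)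
qed

lemma mean_sin_sq_tendsto:
  fixes t :: "nat \<Rightarrow> real"
  assumes lim: "(\<lambda>M. real M * t M) \<longlonglongrightarrow> \<tau>" and "0 < \<tau>" and pos: "eventually (\<lambda>M. 0 < t M) sequentially"
  shows "(\<lambda>M. (\<Sum>k<M. (sin (real k * t M))\<^sup>2) / real M) \<longlonglongrightarrow> 1 / 2 - sin (2 * \<tau>) / (4 * \<tau>)"
proof -
  have t: "t \<longlonglongrightarrow> 0" and Msin: "(\<lambda>M. real M * sin (t M)) \<longlonglongrightarrow> \<tau>"
    using scaled_angle_tendsto[OF lim eventually_mono[OF pos]] by auto
  have "(\<lambda>M. 1 / 2 - (sin (2 * (real M * t M) - t M) + sin (t M)) / (4 * (real M * sin (t M))))
      \<longlonglongrightarrow> 1 / 2 - (sin (2 * \<tau> - 0) + sin 0) / (4 * \<tau>)"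
    using \<open>0 < \<tau>\<close> by (intro tendsto_intros lim t Msin) simp
  then have "(\<lambda>M. 1 / 2 - (sin (2 * (real M * t M) - t M) + sin (t M)) / (4 * (real M * sin (t M))))
      \<longlonglongrightarrow> 1 / 2 - sin (2 * \<tau>) / (4 * \<tau>)"
    by simp
  moreover have "eventually (\<lambda>M. t M < pi) sequentially"
    using t pi_gt_zero by (rule order_tendstoD)
  then have "eventually (\<lambda>M.
      1 / 2 - (sin (2 * (real M * t M) - t M) + sin (t M)) / (4 * (real M * sin (t M))) =
      (\<Sum>k<M. (sin (real k * t M))\<^sup>2) / real M) sequentially"
    using pos eventually_gt_at_top[of 0]
  proof eventually_elim
    case (elim M)
    then have "sin (t M) > 0"
      by (simp add: sin_gt_zero)
    moreover have "(2 * real M - 1) * t M = 2 * (real M * t M) - t M"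
      by (simp add: algebra_simps)
    ultimately have closed: "(\<Sum>k<M. (sin (real k * t M))\<^sup>2) =
        real M / 2 - (sin (2 * (real M * t M) - t M) + sin (t M)) / (4 * sin (t M))"
      using sum_sin_sq_closed_form[of "t M" M] by simp
    show ?case
      unfolding closed using elim by (simp add: diff_divide_distrib divide_divide_eq_left mult.commute)
  qed
  ultimately show ?thesis
    by (rule Lim_transform_eventually)
qed

lemma tendsto_by_error_bound:
  fixes f g e :: "'a \<Rightarrow> real"
  assumes "(g \<longlongrightarrow> L) F" and "eventually (\<lambda>x. \<bar>f x - g x\<bar> \<le> e x) F" and "(e \<longlongrightarrow> 0) F"
  shows "(f \<longlongrightarrow> L) F"
proof (rule Lim_transform[OF assms(1)])
  show "((\<lambda>x. f x - g x) \<longlongrightarrow> 0) F"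
    using assms(2) by (intro Lim_null_comparison[OF _ assms(3)]) simp
qed

lemma energy_ratio_tendsto:
  fixes r \<tau> :: real and \<theta> :: "nat \<Rightarrow> real"
  assumes r: "0 \<le> r" "r < 1"
    and angle: "eventually (\<lambda>M. 0 < \<theta> M \<and> \<theta> M < pi) sequentially"
    and lim: "(\<lambda>M. real M * min (\<theta> M) (pi - \<theta> M)) \<longlonglongrightarrow> \<tau>"
    and "0 < \<tau>" and "sin \<tau> \<noteq> 0"
  shows "(\<lambda>M. (\<Sum>k<M. (1 - r\<^sup>2) * (sin (real k * \<theta> M))\<^sup>2 + amp_sq r (\<theta> M) (real k * \<theta> M))
      / amp_sq r (\<theta> M) (real (M - 1) * \<theta> M) / real M)
    \<longlonglongrightarrow> (1 / (sin \<tau>)\<^sup>2) * (1 - sin (2 * \<tau>) / (2 * \<tau>))"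
proof -
  define t where "t M = min (\<theta> M) (pi - \<theta> M)" for M
  define q where "q = 1 - r\<^sup>2"
  have "q > 0"
    using r unfolding q_def by (simp add: power_less_one_iff)
  have t_pos: "eventually (\<lambda>M. 0 < t M) sequentially"
    using angle by eventually_elim (simp add: t_def)
  have sin_t: "sin (\<theta> M) = sin (t M)" for M
    unfolding t_def min_def by (simp add: sin_pi_minus)
  have sin_sq_t: "(sin (real k * \<theta> M))\<^sup>2 = (sin (real k * t M))\<^sup>2" for k M
    unfolding t_def min_def using sin_sq_mult_pi_minus[of k "\<theta> M"] by simp
  have "t \<longlonglongrightarrow> 0"
    using scaled_angle_tendsto(1)[OF lim[folded t_def] eventually_mono[OF t_pos]] by simp
  then have "(\<lambda>M. 4 * \<bar>sin (t M)\<bar>) \<longlonglongrightarrow> 4 * \<bar>sin 0\<bar>"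
    by (intro tendsto_intros)
  then have err: "(\<lambda>M. 4 * \<bar>sin (\<theta> M)\<bar>) \<longlonglongrightarrow> 0"
    unfolding sin_t by simp
  have approx: "\<bar>amp_sq r (\<theta> M) x - q * (sin x)\<^sup>2\<bar> \<le> 4 * \<bar>sin (\<theta> M)\<bar>" for M x
    using amp_sq_approx r unfolding q_def by simp
  have num: "(\<lambda>M. (\<Sum>k<M. q * (sin (real k * \<theta> M))\<^sup>2 + amp_sq r (\<theta> M) (real k * \<theta> M)) / real M)
      \<longlonglongrightarrow> 2 * q * (1 / 2 - sin (2 * \<tau>) / (4 * \<tau>))"
  proof (rule tendsto_by_error_bound[OF _ _ err])
    show "(\<lambda>M. 2 * q * ((\<Sum>k<M. (sin (real k * t M))\<^sup>2) / real M))
        \<longlonglongrightarrow> 2 * q * (1 / 2 - sin (2 * \<tau>) / (4 * \<tau>))"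
      by (intro tendsto_mult tendsto_const mean_sin_sq_tendsto[OF lim[folded t_def] \<open>0 < \<tau>\<close> t_pos])
    show "eventually (\<lambda>M. \<bar>(\<Sum>k<M. q * (sin (real k * \<theta> M))\<^sup>2 + amp_sq r (\<theta> M) (real k * \<theta> M)) / real M
        - 2 * q * ((\<Sum>k<M. (sin (real k * t M))\<^sup>2) / real M)\<bar> \<le> 4 * \<bar>sin (\<theta> M)\<bar>) sequentially"
      using eventually_gt_at_top[of 0]
    proof eventually_elim
      case (elim M)
      have "\<bar>\<Sum>k<M. amp_sq r (\<theta> M) (real k * \<theta> M) - q * (sin (real k * \<theta> M))\<^sup>2\<bar>
          \<le> (\<Sum>k<M. \<bar>amp_sq r (\<theta> M) (real k * \<theta> M) - q * (sin (real k * \<theta> M))\<^sup>2\<bar>)"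
        by (rule sum_abs)
      also have "\<dots> \<le> real M * (4 * \<bar>sin (\<theta> M)\<bar>)"
        using sum_bounded_above[of "{..<M}", OF approx] by simp
      finally have bound: "\<bar>\<Sum>k<M. amp_sq r (\<theta> M) (real k * \<theta> M) - q * (sin (real k * \<theta> M))\<^sup>2\<bar>
          \<le> real M * (4 * \<bar>sin (\<theta> M)\<bar>)" .
      have "(\<Sum>k<M. q * (sin (real k * \<theta> M))\<^sup>2 + amp_sq r (\<theta> M) (real k * \<theta> M)) / real M
          - 2 * q * ((\<Sum>k<M. (sin (real k * t M))\<^sup>2) / real M)
          = (\<Sum>k<M. amp_sq r (\<theta> M) (real k * \<theta> M) - q * (sin (real k * \<theta> M))\<^sup>2) / real M"
        unfolding sin_sq_t
        by (simp add: sum.distrib sum_subtractf sum_distrib_left diff_divide_distrib add_divide_distrib mult.assoc)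
      then show ?case
        using bound elim by (simp add: divide_le_eq abs_divide mult.commute)
    qed
  qed
  have den: "(\<lambda>M. amp_sq r (\<theta> M) (real (M - 1) * \<theta> M)) \<longlonglongrightarrow> q * (sin \<tau>)\<^sup>2"
  proof (rule tendsto_by_error_bound[OF _ _ err])
    have "(\<lambda>M. real M * t M - t M) \<longlonglongrightarrow> \<tau>"
      using tendsto_diff[OF lim[folded t_def] \<open>t \<longlonglongrightarrow> 0\<close>] by simp
    moreover have "eventually (\<lambda>M. real M * t M - t M = real (M - 1) * t M) sequentially"
      using eventually_gt_at_top[of 0] by eventually_elim (simp add: of_nat_diff algebra_simps)
    ultimately have "(\<lambda>M. real (M - 1) * t M) \<longlonglongrightarrow> \<tau>"
      by (rule Lim_transform_eventually)
    then show "(\<lambda>M. q * (sin (real (M - 1) * t M))\<^sup>2) \<longlonglongrightarrow> q * (sin \<tau>)\<^sup>2"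
      by (intro tendsto_intros)
    show "eventually (\<lambda>M. \<bar>amp_sq r (\<theta> M) (real (M - 1) * \<theta> M) - q * (sin (real (M - 1) * t M))\<^sup>2\<bar>
        \<le> 4 * \<bar>sin (\<theta> M)\<bar>) sequentially"
      using approx unfolding sin_sq_t[symmetric] by simp
  qed
  have "(\<lambda>M. (\<Sum>k<M. q * (sin (real k * \<theta> M))\<^sup>2 + amp_sq r (\<theta> M) (real k * \<theta> M)) / real M
      / amp_sq r (\<theta> M) (real (M - 1) * \<theta> M))
    \<longlonglongrightarrow> 2 * q * (1 / 2 - sin (2 * \<tau>) / (4 * \<tau>)) / (q * (sin \<tau>)\<^sup>2)"
    using \<open>q > 0\<close> \<open>sin \<tau> \<noteq> 0\<close> by (intro tendsto_divide num den) simp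
  moreover have "2 * q * (1 / 2 - sin (2 * \<tau>) / (4 * \<tau>)) / (q * (sin \<tau>)\<^sup>2)
      = (1 / (sin \<tau>)\<^sup>2) * (1 - sin (2 * \<tau>) / (2 * \<tau>))"
    using \<open>q > 0\<close> \<open>0 < \<tau>\<close> \<open>sin \<tau> \<noteq> 0\<close> by (simp add: field_simps)
  ultimately show ?thesis
    unfolding q_def by (simp add: divide_divide_eq_left mult.commute)
qed

theorem mainTheorem12:
  fixes a b c d s :: complex and \<omega> :: "nat \<Rightarrow> complex" and \<theta> :: "nat \<Rightarrow> real"
    and \<theta>s :: real
  assumes "unitary2 a b c d"
    and "s\<^sup>2 = a * d - b * c"
    and "a * b * c * d \<noteq> 0"
    and "\<forall>M\<ge>1. \<omega> M \<in> B_in a"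
    and "\<forall>M\<ge>1. 0 < \<theta> M \<and> \<theta> M < pi \<and> complex_of_real (cos (\<theta> M)) = xfun a (\<omega> M)"
    and "(\<lambda>M. real M * min (\<theta> M) (pi - \<theta> M)) \<longlonglongrightarrow> \<theta>s"
    and "\<theta>s > 0"
    and "\<forall>k::int. \<theta>s \<noteq> of_int k * pi"
  shows "(\<lambda>M. energy a b c d s M (\<omega> M) / real M) \<longlonglongrightarrow>
           (1 / (sin \<theta>s)\<^sup>2) * (1 - sin (2 * \<theta>s) / (2 * \<theta>s))"
proof -
  have setting: "coin_resolvent a b c d s (\<omega> M) (\<theta> M)" if "M \<ge> 1" for M
    using assms(1-3) assms(4,5)[rule_format, OF that] unfolding B_in_def by unfold_locales auto
  have "cmod a < 1"
    using unitary2_norm_bounds[OF assms(1)] assms(3) by auto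
  moreover have "eventually (\<lambda>M. 0 < \<theta> M \<and> \<theta> M < pi) sequentially"
    using eventually_ge_at_top[of 1] by eventually_elim (use assms(5) in auto)
  moreover have "sin \<theta>s \<noteq> 0"
    using assms(8) sin_zero_iff_int2 by blast
  ultimately have "(\<lambda>M. (\<Sum>k<M. (1 - (cmod a)\<^sup>2) * (sin (real k * \<theta> M))\<^sup>2 + amp_sq (cmod a) (\<theta> M) (real k * \<theta> M))
      / amp_sq (cmod a) (\<theta> M) (real (M - 1) * \<theta> M) / real M)
    \<longlonglongrightarrow> (1 / (sin \<theta>s)\<^sup>2) * (1 - sin (2 * \<theta>s) / (2 * \<theta>s))"
    using energy_ratio_tendsto[OF norm_ge_zero] assms(6,7) by blast
  moreover have "eventually (\<lambda>M.
      (\<Sum>k<M. (1 - (cmod a)\<^sup>2) * (sin (real k * \<theta> M))\<^sup>2 + amp_sq (cmod a) (\<theta> M) (real k * \<theta> M))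
      / amp_sq (cmod a) (\<theta> M) (real (M - 1) * \<theta> M) / real M = energy a b c d s M (\<omega> M) / real M) sequentially"
    using eventually_ge_at_top[of 1] by eventually_elim (simp add: coin_resolvent.energy_formula[OF setting])
  ultimately show ?thesis
    by (rule Lim_transform_eventually)
qed

end
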